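(* Let $n\ge 1$ have canonical prime factorization $n=p_1^{\alpha_1}p_2^{\alpha_2}\cdots p_r^{\alpha_r}$. Then $$S(n)\cong \bigotimes_{i=1}^r S(p_i^{\alpha_i}),\qquad U(n)\cong \bigotimes_{i=1}^r U(p_i^{\alpha_i}),$$ where $\otimes$ is the Kronecker product. Moreover $U(n)$ is a (real) selfadjoint unitary involution, i.e. $U(n)=U(n)^*$ and $U(n)^2=I$, and $S(n)^2=nI$.
   Context: For integers $n\ge1$ and $x$, the Ramanujan sum is $c_n(x)=\sum_{1\le j\le n,\ (j,n)=1} e^{2\pi i jx/n}$. $\phi$ is Euler's totient function and $\tau(n)$ the number of positive divisors of $n$. For any $N\ge 1$, list the positive divisors of $N$ in some order $d_1,\dots,d_{\tau(N)}$ and define the $\tau(N)\times\tau(N)$ matrices $S(N)$ and $U(N)$ by $[S(N)]_{i,j}=c_{d_i}(N/d_j)$ and $[U(N)]_{i,j}=\frac{1}{\sqrt{N}}\,c_{d_i}(N/d_j)\sqrt{\phi(d_j)/\phi(d_i)}$. Different orderings of the divisors give matrices that are similar via a permutation matrix. For square matrices, $A\cong B$ means $B=P^{-1}AP$ for some permutation matrix $P$. *)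

theory Defs
  imports "Jordan_Normal_Form.Schur_Decomposition" "HOL-Number_Theory.Number_Theory"
    "HOL-Combinatorics.Permutations"
begin

definition ramanujan_sum :: "nat \<Rightarrow> int \<Rightarrow> complex" where
  "ramanujan_sum n x = (\<Sum>j\<in>{j\<in>{1..n}. coprime j n}. cis (2 * pi * real j * real_of_int x / real n))"

definition divisors_list :: "nat \<Rightarrow> nat list" where
  "divisors_list N = sorted_list_of_set {d. d dvd N}"

definition num_divisors :: "nat \<Rightarrow> nat" where
  "num_divisors N = card {d. d dvd N}"

definition S_mat :: "nat \<Rightarrow> complex mat" where
  "S_mat N = mat (num_divisors N) (num_divisors N)
     (\<lambda>(i, j). ramanujan_sum (divisors_list N ! i) (int (N div (divisors_list N ! j))))"

definition U_mat :: "nat \<Rightarrow> complex mat" where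
  "U_mat N = mat (num_divisors N) (num_divisors N)
     (\<lambda>(i, j). complex_of_real (1 / sqrt (real N))
        * ramanujan_sum (divisors_list N ! i) (int (N div (divisors_list N ! j)))
        * complex_of_real (sqrt (real (totient (divisors_list N ! j)) / real (totient (divisors_list N ! i)))))"

definition kron :: "'a :: semiring_1 mat \<Rightarrow> 'a mat \<Rightarrow> 'a mat" where
  "kron A B = mat (dim_row A * dim_row B) (dim_col A * dim_col B)
     (\<lambda>(i, j). A $$ (i div dim_row B, j div dim_col B) * B $$ (i mod dim_row B, j mod dim_col B))"

definition kron_list :: "'a :: semiring_1 mat list \<Rightarrow> 'a mat" where
  "kron_list Ms = foldr kron Ms (1\<^sub>m 1)"

definition perm_mat :: "nat \<Rightarrow> (nat \<Rightarrow> nat) \<Rightarrow> 'a :: semiring_1 mat" where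
  "perm_mat n f = mat n n (\<lambda>(i, j). if i = f j then 1 else 0)"

definition perm_similar :: "'a :: semiring_1 mat \<Rightarrow> 'a mat \<Rightarrow> bool" where
  "perm_similar A B \<longleftrightarrow> (\<exists>n f Q. A \<in> carrier_mat n n \<and> f permutes {..<n} \<and>
      Q \<in> carrier_mat n n \<and> Q * perm_mat n f = 1\<^sub>m n \<and> perm_mat n f * Q = 1\<^sub>m n \<and>
      B = Q * A * perm_mat n f)"

definition prime_power_factors :: "nat \<Rightarrow> nat list" where
  "prime_power_factors n = map (\<lambda>p. p ^ multiplicity p n) (sorted_list_of_set (prime_factors n))"

end

theory Submission
  imports Defs
begin

(*
  The sum c_a(x) is multiplicative in a and unchanged when x is multiplied
  by a unit modulo a; together these give, for coprime q and m,
  c_{a1 a2}(q m / (b1 b2)) = c_{a1}(q / b1) c_{a2}(m / b2) whenever a1, b1 | q and a2, b2 | m.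
  As d |-> (gcd(d, q), gcd(d, m)) identifies the divisors of q m with pairs of divisors, this
  says that S(q m), and likewise U(q m), is S(q) (x) S(m) up to a reordering of the divisors.
  It also makes the identities  sum_{d | n} c_a(n/d) c_d(n/b) = n [a = b]  and
  phi(b) c_a(n/b) = phi(a) c_b(n/a)  multiplicative in n, so they only need to be checked at
  prime powers, where c_{p^i}(p^t) is explicit. The first identity is S(n)^2 = n I. Since
  U(n) = n^(-1/2) D^(-1) S(n) D with D = diag(sqrt phi(d)), it also gives U(n)^2 = I; the
  second identity makes U(n) symmetric, and U(n) is real because every c_a(x) is.
*)

section \<open>Ramanujan sums\<close>

definition e_frac :: "nat \<Rightarrow> int \<Rightarrow> complex" where
  "e_frac N t = cis (2 * pi * real_of_int t / real N)"

lemma e_frac_add: "e_frac N (s + t) = e_frac N s * e_frac N t"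
  by (simp add: e_frac_def cis_mult add_divide_distrib distrib_left)

lemma e_frac_power: "e_frac N (int j * t) = e_frac N t ^ j"
  by (induction j) (simp_all add: e_frac_def[of N 0] distrib_right e_frac_add)

lemma e_frac_multiple: "N > 0 \<Longrightarrow> e_frac N (int N * k) = 1"
  using cis_multiple_2pi[of "of_int k"] by (simp add: e_frac_def mult.assoc)

lemma e_frac_eq_1_iff:
  assumes "N > 0"
  shows "e_frac N t = 1 \<longleftrightarrow> int N dvd t"
proof
  assume "e_frac N t = 1"
  then have "cos (2 * pi * (real_of_int t / real N)) = 1"
    by (metis e_frac_def cis.sel(1) one_complex.sel(1) times_divide_eq_right)
  then obtain k :: int where "2 * pi * (real_of_int t / real N) = real_of_int k * 2 * pi"
    using cos_one_2pi_int by blast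
  then have "real_of_int t = real_of_int (int N * k)"
    using assms by (simp add: field_simps)
  then show "int N dvd t"
    by (metis dvd_triv_left of_int_eq_iff)
qed (use e_frac_multiple[OF assms] in auto)

lemma e_frac_cong:
  assumes "N > 0" and "s mod int N = t mod int N"
  shows "e_frac N s = e_frac N t"
proof -
  obtain k where "s = t + int N * k"
    using assms(2) by (metis mod_eq_dvd_iff dvd_def add_diff_cancel_left' diff_add_cancel add.commute)
  then show ?thesis using e_frac_multiple[OF assms(1)] by (simp add: e_frac_add)
qed

lemma e_frac_scale: "p > 0 \<Longrightarrow> e_frac (p * M) (int p * t) = e_frac M t"
  by (simp add: e_frac_def mult.assoc)

lemma e_frac_uminus: "e_frac N (- t) = cnj (e_frac N t)"
  by (simp add: e_frac_def cis_cnj)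

lemma e_frac_crt:
  assumes "a > 0" "b > 0" and "u * int b + v * int a = 1"
  shows "e_frac (a * b) t = e_frac a (t * u) * e_frac b (t * v)"
proof -
  have "t = int b * (t * u) + int a * (t * v)"
    using arg_cong[OF assms(3), of "(*) t"] by (simp add: algebra_simps)
  then have h: "e_frac (a * b) t = e_frac (a * b) (int b * (t * u)) * e_frac (a * b) (int a * (t * v))"
    by (metis e_frac_add)
  have "e_frac (a * b) (int b * (t * u)) = e_frac a (t * u)"
    using e_frac_scale[OF assms(2), of a "t * u"] by (simp only: mult.commute)
  moreover have "e_frac (a * b) (int a * (t * v)) = e_frac b (t * v)"
    using e_frac_scale[OF assms(1)] .
  ultimately show ?thesis by (simp only: h)
qed

definition root_sum :: "nat \<Rightarrow> int \<Rightarrow> complex" where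
  "root_sum N t = (\<Sum>j<N. e_frac N (int j * t))"

lemma root_sum_eq:
  assumes "N > 0"
  shows "root_sum N t = (if int N dvd t then of_nat N else 0)"
proof (cases "int N dvd t")
  case True
  then have "e_frac N (int j * t) = 1" for j
    using e_frac_eq_1_iff[OF assms] by simp
  then show ?thesis using True by (simp add: root_sum_def)
next
  case False
  have "e_frac N t ^ N = 1"
    using e_frac_power[of N N t] e_frac_multiple[OF assms] by simp
  then show ?thesis
    using False e_frac_eq_1_iff[OF assms] by (simp add: root_sum_def e_frac_power geometric_sum)
qed

lemma root_sum_shift:
  assumes "N > 0"
  shows "(\<Sum>j\<in>{0<..N}. e_frac N (int j * t)) = root_sum N t"
proof -
  have "{0<..N} = insert N {0<..<N}" "{..<N} = insert 0 {0<..<N}" using assms by auto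
  then show ?thesis using e_frac_multiple[OF assms, of t] by (simp add: root_sum_def e_frac_def)
qed

lemma ramanujan_sum_totatives: "ramanujan_sum n t = (\<Sum>j\<in>totatives n. e_frac n (int j * t))"
  unfolding ramanujan_sum_def e_frac_def
  by (rule sum.cong) (auto simp: in_totatives_iff mult.assoc)

lemma ramanujan_sum_1 [simp]: "ramanujan_sum (Suc 0) t = 1"
  by (simp add: ramanujan_sum_def)

lemma ramanujan_sum_prime_power_Suc:
  assumes "prime p"
  shows "ramanujan_sum (p ^ Suc k) t = root_sum (p ^ Suc k) t - root_sum (p ^ k) t"
proof -
  have p0: "p > 0" using assms prime_gt_0_nat by blast
  have inj: "inj_on ((*) p) {0<..p ^ k}" using p0 by (auto simp: inj_on_def)
  have "ramanujan_sum (p ^ Suc k) t = (\<Sum>j\<in>{0<..p ^ Suc k}. e_frac (p ^ Suc k) (int j * t))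
      - (\<Sum>j\<in>(*) p ` {0<..p ^ k}. e_frac (p ^ Suc k) (int j * t))"
    unfolding ramanujan_sum_totatives totatives_prime_power_Suc[OF assms]
    by (rule sum_diff) (use p0 in auto)
  also have "(\<Sum>j\<in>(*) p ` {0<..p ^ k}. e_frac (p ^ Suc k) (int j * t))
      = (\<Sum>j\<in>{0<..p ^ k}. e_frac (p ^ k) (int j * t))"
    using p0 by (subst sum.reindex[OF inj]) (simp add: e_frac_def mult.commute mult.left_commute)
  finally show ?thesis using p0 by (simp add: root_sum_shift)
qed

lemma bij_betw_totatives_mult_unit:
  assumes a1: "a > 1" and cop: "coprime y (int a)"
  shows "bij_betw (\<lambda>j. nat ((int j * y) mod int a)) (totatives a) (totatives a)"
proof -
  define f where "f j = nat ((int j * y) mod int a)" for j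
  have fint: "int (f j) = (int j * y) mod int a" for j unfolding f_def using a1 by simp
  have into: "f j \<in> totatives a" if "j \<in> totatives a" for j
  proof -
    have c: "coprime (int j * y) (int a)"
      using that cop by (simp add: in_totatives_iff coprime_int_iff)
    then have "\<not> int a dvd int j * y"
      using a1
      by (metis coprime_common_divisor dvd_refl of_nat_1 zdvd1_eq of_nat_eq_iff less_irrefl abs_of_nat)
    then have "(int j * y) mod int a \<noteq> 0"
      by (simp add: dvd_eq_mod_eq_0)
    then have "0 < f j" "f j \<le> a"
      using fint[of j] pos_mod_bound[of "int a" "int j * y"] pos_mod_sign[of "int a" "int j * y"] a1
      by linarith+
    moreover have "coprime (int (f j)) (int a)"
      using c a1 by (simp add: fint)
    then have "coprime (f j) a"
      by (simp add: coprime_int_iff)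
    ultimately show ?thesis by (simp add: in_totatives_iff)
  qed
  have "inj_on f (totatives a)"
  proof
    fix j j' assume j: "j \<in> totatives a" "j' \<in> totatives a" and "f j = f j'"
    then have "int a dvd (int j - int j') * y"
      using fint by (metis mod_eq_dvd_iff left_diff_distrib)
    then have "int a dvd int j - int j'"
      using cop by (metis coprime_commute coprime_dvd_mult_left_iff)
    then show "j = j'"
      using j totatives_less[OF _ a1] by (simp add: mod_eq_dvd_iff[symmetric])
  qed
  then show ?thesis
    using endo_inj_surj[of "totatives a" f] into unfolding f_def[symmetric] bij_betw_def by auto
qed

lemma ramanujan_sum_mult_unit:
  assumes a0: "a > 0" and cop: "coprime y (int a)"
  shows "ramanujan_sum a (t * y) = ramanujan_sum a t"
proof (cases "a = 1")
  case False
  let ?f = "\<lambda>j. nat ((int j * y) mod int a)"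
  have b: "bij_betw ?f (totatives a) (totatives a)"
    using False a0 cop by (intro bij_betw_totatives_mult_unit) simp_all
  have "ramanujan_sum a t = (\<Sum>j\<in>totatives a. e_frac a (int (?f j) * t))"
    unfolding ramanujan_sum_totatives by (rule sum.reindex_bij_betw[OF b, symmetric])
  also have "\<dots> = ramanujan_sum a (t * y)"
    unfolding ramanujan_sum_totatives
    by (intro sum.cong refl e_frac_cong[OF a0])
      (simp add: a0 mod_mult_left_eq mod_mult_right_eq mult_ac)
  finally show ?thesis ..
qed simp

lemma ramanujan_sum_real: "a > 0 \<Longrightarrow> ramanujan_sum a t \<in> \<real>"
  using ramanujan_sum_mult_unit[of a "-1" t]
  by (simp add: Reals_cnj_iff ramanujan_sum_totatives e_frac_uminus)

lemma ramanujan_sum_mult: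
  assumes cop: "coprime a b" and a0: "a > 0" and b0: "b > 0"
  shows "ramanujan_sum (a * b) t = ramanujan_sum a t * ramanujan_sum b t"
proof (cases "a = 1 \<or> b = 1")
  case False
  then have a1: "a > 1" and b1: "b > 1" using a0 b0 by auto
  obtain u v where uv: "u * int b + v * int a = 1"
    using cop by (metis bezout_coefficients_fst_snd coprime_commute coprime_iff_gcd_eq_1
        coprime_int_iff)
  have cu: "coprime u (int a)" and cv: "coprime v (int b)"
    using uv by (auto intro!: coprimeI dest: dvd_mult_left[of _ _ "int b"] dvd_mult_left[of _ _ "int a"]
        simp flip: uv)
  have "ramanujan_sum (a * b) t
      = (\<Sum>j\<in>totatives (a * b). e_frac a (int (j mod a) * (t * u)) * e_frac b (int (j mod b) * (t * v)))"
    unfolding ramanujan_sum_totatives e_frac_crt[OF a0 b0 uv]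
    by (intro sum.cong refl arg_cong2[where f = "(*)"] e_frac_cong a0 b0)
      (simp_all add: zmod_int mod_mult_left_eq mult.assoc)
  also have "\<dots> = (\<Sum>(j1, j2)\<in>totatives a \<times> totatives b.
      e_frac a (int j1 * (t * u)) * e_frac b (int j2 * (t * v)))"
    using sum.reindex_bij_betw[OF bij_betw_totatives[OF a1 b1 cop],
        of "\<lambda>(j1, j2). e_frac a (int j1 * (t * u)) * e_frac b (int j2 * (t * v))"] by simp
  also have "\<dots> = ramanujan_sum a (t * u) * ramanujan_sum b (t * v)"
    by (simp add: ramanujan_sum_totatives sum_product sum.cartesian_product)
  finally show ?thesis
    using ramanujan_sum_mult_unit[OF a0 cu] ramanujan_sum_mult_unit[OF b0 cv] by simp
qed auto

lemma ramanujan_sum_divisor_mult: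
  assumes cop: "coprime q m" and "q > 0" "m > 0"
    and d: "a1 dvd q" "b1 dvd q" "a2 dvd m" "b2 dvd m"
  shows "ramanujan_sum (a1 * a2) (int ((q * m) div (b1 * b2)))
       = ramanujan_sum a1 (int (q div b1)) * ramanujan_sum a2 (int (m div b2))"
proof -
  have a0: "a1 > 0" "a2 > 0" using d assms(2,3) by (auto intro!: gr0I)
  have eq: "(q * m) div (b1 * b2) = (q div b1) * (m div b2)"
    using d by (simp add: div_mult_div_if_dvd)
  have "q div b1 dvd q" "m div b2 dvd m"
    using d by (metis dvd_div_mult_self dvd_triv_left)+
  then have c: "coprime (int (m div b2)) (int a1)" "coprime (int (q div b1)) (int a2)"
    using coprime_divisors[OF d(1) _ cop, of "m div b2"] coprime_divisors[OF _ d(3) cop, of "q div b1"]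
    by (simp_all add: coprime_int_iff coprime_commute)
  have "ramanujan_sum (a1 * a2) (int ((q * m) div (b1 * b2)))
      = ramanujan_sum a1 (int (q div b1) * int (m div b2))
        * ramanujan_sum a2 (int (m div b2) * int (q div b1))"
    unfolding eq using coprime_divisors[OF d(1,3) cop] a0 by (simp add: ramanujan_sum_mult mult.commute)
  also have "\<dots> = ramanujan_sum a1 (int (q div b1)) * ramanujan_sum a2 (int (m div b2))"
    using ramanujan_sum_mult_unit[OF a0(1) c(1)] ramanujan_sum_mult_unit[OF a0(2) c(2)] by simp
  finally show ?thesis .
qed

section \<open>Ramanujan sums at prime powers\<close>

lemma root_sum_prime_power:
  assumes "prime p"
  shows "root_sum (p ^ m) (int (p ^ t)) = (if m \<le> t then of_nat (p ^ m) else 0)"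
proof -
  have "int (p ^ m) dvd int (p ^ t) \<longleftrightarrow> m \<le> t"
    using dvd_power_iff_le[OF prime_ge_2_nat[OF assms]] by (simp only: int_dvd_int_iff)
  then show ?thesis using assms by (simp add: root_sum_eq prime_gt_0_nat)
qed

lemma sum_ramanujan_sum_prime_power:
  assumes "prime p"
  shows "(\<Sum>k\<le>m. ramanujan_sum (p ^ k) t) = root_sum (p ^ m) t"
proof (induction m)
  case 0
  then show ?case by (simp add: root_sum_def e_frac_def)
next
  case (Suc m)
  then show ?case using ramanujan_sum_prime_power_Suc[OF assms, of m t] by simp
qed

lemma ramanujan_sum_prime_power:
  assumes p: "prime p"
  shows "ramanujan_sum (p ^ i) (int (p ^ t))
       = (if i \<le> t then of_nat (totient (p ^ i)) else 0) - (if i = Suc t then of_nat (p ^ t) else 0)"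
proof (cases i)
  case (Suc k)
  have "p ^ k \<le> p ^ Suc k" using prime_gt_0_nat[OF p] by simp
  moreover have "totient (p ^ Suc k) = p ^ Suc k - p ^ k"
    using totient_prime_power_Suc[OF p] by (simp add: algebra_simps)
  ultimately have "of_nat (totient (p ^ Suc k)) = (of_nat (p ^ Suc k) - of_nat (p ^ k) :: complex)"
    by (simp add: of_nat_diff)
  then show ?thesis
    unfolding Suc ramanujan_sum_prime_power_Suc[OF p] root_sum_prime_power[OF p] by auto
qed simp

lemma sum_atMost_if_le:
  "(m::nat) \<le> e \<Longrightarrow> (\<Sum>k\<le>e. if k \<le> m then f k else 0) = (\<Sum>k\<le>m. f k)"
  by (simp add: sum.inter_filter[symmetric] atMost_def) (metis (mono_tags) order.trans)

lemma sum_divisors_prime_power: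
  assumes "prime (p::nat)"
  shows "(\<Sum>d | d dvd p ^ e. f d) = (\<Sum>k\<le>e. f (p ^ k))"
proof -
  have "{d. d dvd p ^ e} = (\<lambda>k. p ^ k) ` {..e}"
    using divides_primepow_nat[OF assms] by auto
  moreover have "inj_on (\<lambda>k. p ^ k) {..e}"
    using prime_gt_1_nat[OF assms] by (auto simp: inj_on_def power_inject_exp)
  ultimately show ?thesis by (simp add: sum.reindex)
qed

lemma ramanujan_orthogonality_prime_power:
  assumes p: "prime p" and "i \<le> e" "j \<le> e"
  shows "(\<Sum>k\<le>e. ramanujan_sum (p ^ i) (int (p ^ (e - k))) * ramanujan_sum (p ^ k) (int (p ^ (e - j))))
       = (if i = j then of_nat (p ^ e) else 0)"
proof (cases i)
  case 0
  then show ?thesis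
    using assms
    by (simp add: sum_ramanujan_sum_prime_power[OF p] root_sum_prime_power[OF p] del: of_nat_power)
      linarith
next
  case (Suc i')
  define c where "c k = ramanujan_sum (p ^ k) (int (p ^ (e - j)))" for k
  have summand: "ramanujan_sum (p ^ i) (int (p ^ (e - k)))
      = (if k \<le> e - i then of_nat (p ^ i) else 0) - (if k \<le> e - i' then of_nat (p ^ i') else 0)"
    if "k \<le> e" for k
    using that assms unfolding Suc ramanujan_sum_prime_power_Suc[OF p] root_sum_prime_power[OF p]
    by auto
  have "(\<Sum>k\<le>e. ramanujan_sum (p ^ i) (int (p ^ (e - k))) * c k)
      = (\<Sum>k\<le>e. if k \<le> e - i then of_nat (p ^ i) * c k else 0)
      - (\<Sum>k\<le>e. if k \<le> e - i' then of_nat (p ^ i') * c k else 0)"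
    unfolding sum_subtractf[symmetric]
    by (rule sum.cong) (auto simp: summand algebra_simps simp del: of_nat_power)
  also have "\<dots> = of_nat (p ^ i) * root_sum (p ^ (e - i)) (int (p ^ (e - j)))
      - of_nat (p ^ i') * root_sum (p ^ (e - i')) (int (p ^ (e - j)))"
    using Suc assms
    by (simp add: sum_atMost_if_le sum_distrib_left[symmetric] sum_ramanujan_sum_prime_power[OF p] c_def)
  also have "\<dots> = (if j \<le> i then of_nat (p ^ e) else 0) - (if j \<le> i' then of_nat (p ^ e) else 0)"
  proof -
    have pe: "(of_nat (p ^ k) :: complex) * of_nat (p ^ (e - k)) = of_nat (p ^ e)" if "k \<le> e" for k
      using that by (simp flip: of_nat_mult power_add)
    have "i' < i" using Suc by simp
    then show ?thesis
      unfolding root_sum_prime_power[OF p] using assms by (auto simp: pe simp del: of_nat_power)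
  qed
  finally show ?thesis using Suc by (auto simp: c_def)
qed

lemma ramanujan_totient_symmetry_prime_power:
  assumes p: "prime p" and "i \<le> e" "j \<le> e"
  shows "ramanujan_sum (p ^ i) (int (p ^ (e - j))) * of_nat (totient (p ^ j))
       = ramanujan_sum (p ^ j) (int (p ^ (e - i))) * of_nat (totient (p ^ i))"
proof -
  have key: "p ^ (e - k) * totient (p ^ k) = p ^ (e - 1) * (p - 1)" if "0 < k" "k \<le> e" for k
  proof -
    obtain k' where k: "k = Suc k'" using \<open>0 < k\<close> gr0_implies_Suc by blast
    then have "e - 1 = (e - k) + k'" using that by simp
    then show ?thesis unfolding k totient_prime_power_Suc[OF p] by (simp add: power_add mult.assoc)
  qed
  have "p ^ (e - j) * totient (p ^ j) = p ^ (e - i) * totient (p ^ i)" if "i + j = Suc e"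
    using key[of i] key[of j] that assms by simp
  then show ?thesis
    using assms
    by (auto simp: ramanujan_sum_prime_power[OF p] algebra_simps simp del: of_nat_power
        simp flip: of_nat_mult)
qed

section \<open>Divisors of coprime products\<close>

lemma bij_betw_divisors_mult:
  assumes cop: "coprime (q::nat) m"
  shows "bij_betw (\<lambda>(d1, d2). d1 * d2) ({d. d dvd q} \<times> {d. d dvd m}) {d. d dvd q * m}"
proof (rule bij_betw_imageI)
  have gcd_left: "gcd (d1 * d2) q = d1" and gcd_right: "gcd (d1 * d2) m = d2"
    if "d1 dvd q" "d2 dvd m" for d1 d2
  proof -
    have "coprime q d2" "coprime m d1"
      using coprime_divisors[OF dvd_refl that(2) cop] coprime_divisors[OF that(1) dvd_refl cop]
      by (simp_all add: coprime_commute)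
    then show "gcd (d1 * d2) q = d1" "gcd (d1 * d2) m = d2"
      using that by (simp_all add: gcd_mult_left_right_cancel gcd_mult_left_left_cancel gcd_nat.absorb1)
  qed
  show "inj_on (\<lambda>(d1, d2). d1 * d2) ({d. d dvd q} \<times> {d. d dvd m})"
    by (rule inj_onI) (clarsimp, metis gcd_left gcd_right)
  show "(\<lambda>(d1, d2). d1 * d2) ` ({d. d dvd q} \<times> {d. d dvd m}) = {d. d dvd q * m}"
    by (auto intro: mult_dvd_mono elim!: dvd_productE)
qed

lemma card_divisors_mult:
  "coprime (q::nat) m \<Longrightarrow> card {d. d dvd q * m} = card {d. d dvd q} * card {d. d dvd m}"
  using bij_betw_same_card[OF bij_betw_divisors_mult] by (simp add: card_cartesian_product)

lemma sum_divisors_mult: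
  assumes "coprime (q::nat) m"
  shows "(\<Sum>d | d dvd q * m. f d) = (\<Sum>d1 | d1 dvd q. \<Sum>d2 | d2 dvd m. f (d1 * d2))"
  using sum.reindex_bij_betw[OF bij_betw_divisors_mult[OF assms], of f]
  by (simp add: sum.cartesian_product split_def)

lemma multiplicative_divisor_triple_induct_list:
  fixes P :: "nat \<Rightarrow> nat \<Rightarrow> nat \<Rightarrow> bool"
  assumes "sorted_wrt coprime qs" "\<forall>q\<in>set qs. q > 0"
    and factor: "\<And>q a b. q \<in> set qs \<Longrightarrow> a dvd q \<Longrightarrow> b dvd q \<Longrightarrow> P q a b"
    and one: "P 1 1 1"
    and coprime: "\<And>q m a1 a2 b1 b2. coprime q m \<Longrightarrow> q > 0 \<Longrightarrow> m > 0 \<Longrightarrow> a1 dvd q \<Longrightarrow> b1 dvd q \<Longrightarrow>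
        a2 dvd m \<Longrightarrow> b2 dvd m \<Longrightarrow> P q a1 b1 \<Longrightarrow> P m a2 b2 \<Longrightarrow> P (q * m) (a1 * a2) (b1 * b2)"
    and "a dvd prod_list qs" "b dvd prod_list qs"
  shows "P (prod_list qs) a b"
  using assms(1,2,6,7) factor
proof (induction qs arbitrary: a b)
  case Nil
  then show ?case using one by simp
next
  case (Cons q qs)
  let ?m = "prod_list qs"
  have cop: "coprime q ?m"
    using Cons.prems(1) by (auto intro: prod_list_coprime_right)
  have "?m > 0"
    using Cons.prems(2) by (induction qs) auto
  moreover have "q > 0" using Cons.prems(2) by simp
  moreover obtain a1 a2 where a: "a = a1 * a2" "a1 dvd q" "a2 dvd ?m"
    using Cons.prems(3) by (auto elim: dvd_productE)
  moreover obtain b1 b2 where b: "b = b1 * b2" "b1 dvd q" "b2 dvd ?m"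
    using Cons.prems(4) by (auto elim: dvd_productE)
  moreover have "P ?m a2 b2"
    using Cons a b by simp
  ultimately show ?case
    using coprime[OF cop] Cons.prems(5)[of q] by simp
qed

lemma prod_list_prime_power_factors: "n > 0 \<Longrightarrow> prod_list (prime_power_factors n) = n"
  unfolding prime_power_factors_def
  using prod.distinct_set_conv_list[OF distinct_sorted_list_of_set[where A = "prime_factors n"],
      of "\<lambda>p. p ^ multiplicity p n"]
    prime_factorization_nat[of n]
  by simp

lemma sorted_wrt_coprime_prime_power_factors: "sorted_wrt coprime (prime_power_factors n)"
  unfolding prime_power_factors_def sorted_wrt_map
proof (rule sorted_wrt_mono_rel[OF _ strict_sorted_list_of_set])
  fix p r assume "p \<in> set (sorted_list_of_set (prime_factors n))"
    "r \<in> set (sorted_list_of_set (prime_factors n))" "p < r"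
  then have "coprime p r" by (auto intro: primes_coprime)
  then show "coprime (p ^ multiplicity p n) (r ^ multiplicity r n)" by simp
qed

lemma prime_power_factors_prime_power:
  "q \<in> set (prime_power_factors n) \<Longrightarrow> \<exists>p k. prime p \<and> q = p ^ k"
  by (auto simp: prime_power_factors_def)

lemma multiplicative_divisor_triple_induct [consumes 3, case_names prime_power coprime]:
  fixes P :: "nat \<Rightarrow> nat \<Rightarrow> nat \<Rightarrow> bool"
  assumes "n > 0" "a dvd n" "b dvd n"
    and prime_power: "\<And>p k i j. prime p \<Longrightarrow> i \<le> k \<Longrightarrow> j \<le> k \<Longrightarrow> P (p ^ k) (p ^ i) (p ^ j)"
    and coprime: "\<And>q m a1 a2 b1 b2. coprime q m \<Longrightarrow> q > 0 \<Longrightarrow> m > 0 \<Longrightarrow> a1 dvd q \<Longrightarrow> b1 dvd q \<Longrightarrow>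
        a2 dvd m \<Longrightarrow> b2 dvd m \<Longrightarrow> P q a1 b1 \<Longrightarrow> P m a2 b2 \<Longrightarrow> P (q * m) (a1 * a2) (b1 * b2)"
  shows "P n a b"
proof -
  have "P (prod_list (prime_power_factors n)) a b"
  proof (rule multiplicative_divisor_triple_induct_list[where P = P])
    show "P q a b" if q: "q \<in> set (prime_power_factors n)" and ab: "a dvd q" "b dvd q" for q a b
    proof -
      obtain p k where p: "prime p" "q = p ^ k"
        using prime_power_factors_prime_power[OF q] by blast
      then obtain i j where "i \<le> k" "a = p ^ i" "j \<le> k" "b = p ^ j"
        using ab divides_primepow_nat by meson
      then show ?thesis using prime_power p by simp
    qed
    show "P 1 1 1" using prime_power[of 2 0 0 0] by simp
    show "\<forall>q\<in>set (prime_power_factors n). q > 0"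
      using prime_power_factors_prime_power prime_gt_0_nat by fastforce
  qed (use coprime assms(1-3) in \<open>simp_all add: prod_list_prime_power_factors
        sorted_wrt_coprime_prime_power_factors\<close>)
  then show ?thesis using assms(1) by (simp add: prod_list_prime_power_factors)
qed

section \<open>Permutation similarity\<close>

lemma perm_mat_carrier_mat: "perm_mat N f \<in> carrier_mat N N"
  by (simp add: perm_mat_def)

lemma perm_mat_inv_mult:
  assumes "A \<in> carrier_mat N N" and g: "g permutes {..<N}"
  shows "perm_mat N (inv_into UNIV g) * A = mat N N (\<lambda>(i, j). A $$ (g i, j))"
proof -
  have "(\<Sum>k<N. (if i = inv_into UNIV g k then 1 else 0) * A $$ (k, j)) = A $$ (g i, j)" if "i < N" for i j
  proof -
    have "i = inv_into UNIV g k \<longleftrightarrow> k = g i" for k using permutes_inverses[OF g] by metis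
    then have "(\<Sum>k<N. (if i = inv_into UNIV g k then 1 else 0) * A $$ (k, j))
        = (\<Sum>k<N. if k = g i then A $$ (k, j) else 0)"
      by (intro sum.cong) auto
    then show ?thesis using permutes_in_image[OF g] that by simp
  qed
  then show ?thesis
    using assms by (intro eq_matI) (simp_all add: perm_mat_def scalar_prod_def lessThan_atLeast0)
qed

lemma mult_perm_mat:
  assumes "A \<in> carrier_mat N N" and g: "g permutes {..<N}"
  shows "A * perm_mat N g = mat N N (\<lambda>(i, j). A $$ (i, g j))"
proof -
  have "(\<Sum>k<N. A $$ (i, k) * (if k = g j then 1 else 0)) = A $$ (i, g j)" if "j < N" for i j
    using permutes_in_image[OF g] that by (simp add: if_distrib[of "(*) _"] cong: if_cong)
  then show ?thesis
    using assms by (intro eq_matI) (simp_all add: perm_mat_def scalar_prod_def lessThan_atLeast0)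
qed

lemma perm_similar_permute:
  assumes A: "A \<in> carrier_mat N N" and f: "f permutes {..<N}"
  shows "perm_similar A (mat N N (\<lambda>(i, j). A $$ (f i, f j)))"
proof -
  let ?P = "perm_mat N f :: 'a mat" and ?Q = "perm_mat N (inv_into UNIV f) :: 'a mat"
  have inv: "inv_into UNIV f permutes {..<N}" using permutes_inv[OF f] .
  have "?Q * ?P = mat N N (\<lambda>(i, j). ?P $$ (f i, j))"
    by (rule perm_mat_inv_mult[OF perm_mat_carrier_mat f])
  also have "\<dots> = 1\<^sub>m N"
    using permutes_in_image[OF f] permutes_inj[OF f]
    by (intro eq_matI) (auto simp: perm_mat_def dest: injD)
  finally have QP: "?Q * ?P = 1\<^sub>m N" .
  have "?P * ?Q = mat N N (\<lambda>(i, j). ?P $$ (i, inv_into UNIV f j))"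
    by (rule mult_perm_mat[OF perm_mat_carrier_mat inv])
  also have "\<dots> = 1\<^sub>m N"
    using permutes_in_image[OF inv] permutes_inverses(1)[OF f]
    by (intro eq_matI) (auto simp: perm_mat_def)
  finally have PQ: "?P * ?Q = 1\<^sub>m N" .
  have QA: "?Q * A = mat N N (\<lambda>(i, j). A $$ (f i, j))"
    by (rule perm_mat_inv_mult[OF A f])
  have "?Q * A * ?P = mat N N (\<lambda>(i, j). (?Q * A) $$ (i, f j))"
    by (rule mult_perm_mat[OF _ f]) (simp add: QA)
  also have "\<dots> = mat N N (\<lambda>(i, j). A $$ (f i, f j))"
    using permutes_in_image[OF f] by (intro eq_matI) (simp_all add: QA)
  finally have "?Q * A * ?P = mat N N (\<lambda>(i, j). A $$ (f i, f j))" .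
  then show ?thesis
    unfolding perm_similar_def using A f QP PQ
    by (intro exI[of _ N] exI[of _ f] exI[of _ ?Q]) (simp add: perm_mat_carrier_mat)
qed

section \<open>Matrices indexed by divisors\<close>

definition divisor_mat_wrt :: "(nat \<Rightarrow> nat) \<Rightarrow> (nat \<Rightarrow> nat \<Rightarrow> nat \<Rightarrow> 'a) \<Rightarrow> nat \<Rightarrow> 'a mat" where
  "divisor_mat_wrt h F N = mat (num_divisors N) (num_divisors N) (\<lambda>(i, j). F N (h i) (h j))"

definition divisor_mat :: "(nat \<Rightarrow> nat \<Rightarrow> nat \<Rightarrow> 'a) \<Rightarrow> nat \<Rightarrow> 'a mat" where
  "divisor_mat F N = divisor_mat_wrt ((!) (divisors_list N)) F N"

lemma bij_betw_divisors_list: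
  assumes "N > 0"
  shows "bij_betw ((!) (divisors_list N)) {..<num_divisors N} {d. d dvd N}"
proof -
  have "finite {d. d dvd N}" using assms by simp
  then show ?thesis unfolding divisors_list_def num_divisors_def by (intro bij_betw_nth) simp_all
qed

lemma divisors_list_nth_dvd: "N > 0 \<Longrightarrow> i < num_divisors N \<Longrightarrow> divisors_list N ! i dvd N"
  using bij_betw_apply[OF bij_betw_divisors_list] by blast

lemma divisors_list_nth_eq_iff:
  "N > 0 \<Longrightarrow> i < num_divisors N \<Longrightarrow> j < num_divisors N \<Longrightarrow>
    divisors_list N ! i = divisors_list N ! j \<longleftrightarrow> i = j"
  using bij_betw_imp_inj_on[OF bij_betw_divisors_list] by (auto dest: inj_onD)

lemma divisor_mat_mult_entry:
  assumes "N > 0" "i < num_divisors N" "j < num_divisors N"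
  shows "(divisor_mat F N * divisor_mat G N) $$ (i, j)
       = (\<Sum>d | d dvd N. F N (divisors_list N ! i) d * G N d (divisors_list N ! j))"
proof -
  have "(divisor_mat F N * divisor_mat G N) $$ (i, j) = (\<Sum>k<num_divisors N.
      F N (divisors_list N ! i) (divisors_list N ! k) * G N (divisors_list N ! k) (divisors_list N ! j))"
    using assms by (simp add: divisor_mat_def divisor_mat_wrt_def scalar_prod_def lessThan_atLeast0)
  also have "\<dots> = (\<Sum>d | d dvd N. F N (divisors_list N ! i) d * G N d (divisors_list N ! j))"
    by (rule sum.reindex_bij_betw[OF bij_betw_divisors_list[OF assms(1)]])
  finally show ?thesis .
qed

lemma bij_betw_div_mod:
  assumes "(t::nat) > 0"
  shows "bij_betw (\<lambda>i. (i div t, i mod t)) {..<s * t} ({..<s} \<times> {..<t})"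
proof (rule bij_betw_byWitness[where f' = "\<lambda>(a, b). a * t + b"])
  have "a * t + b < s * t" if "a < s" "b < t" for a b
  proof -
    have "a * t + b < Suc a * t" using that by simp
    also have "\<dots> \<le> s * t" using that by (intro mult_le_mono1) simp
    finally show ?thesis .
  qed
  then show "(\<lambda>(a, b). a * t + b) ` ({..<s} \<times> {..<t}) \<subseteq> {..<s * t}" by auto
qed (use assms in \<open>auto simp: less_mult_imp_div_less\<close>)

lemma perm_similar_divisor_mat_wrt:
  assumes g: "bij_betw g {..<num_divisors N} {d. d dvd N}"
    and h: "bij_betw h {..<num_divisors N} {d. d dvd N}"
  shows "perm_similar (divisor_mat_wrt g F N) (divisor_mat_wrt h F N)"
proof -
  let ?\<tau> = "num_divisors N"
  define f where "f i = (if i < ?\<tau> then inv_into {..<?\<tau>} g (h i) else i)" for i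
  have "bij_betw (inv_into {..<?\<tau>} g \<circ> h) {..<?\<tau>} {..<?\<tau>}"
    by (rule bij_betw_trans[OF h bij_betw_inv_into[OF g]])
  then have "bij_betw f {..<?\<tau>} {..<?\<tau>}"
    by (rule bij_betw_cong[THEN iffD1, rotated]) (simp add: f_def)
  then have f: "f permutes {..<?\<tau>}"
    by (rule bij_imp_permutes) (simp add: f_def)
  have gf: "g (f i) = h i" if "i < ?\<tau>" for i
  proof -
    have "h i \<in> g ` {..<?\<tau>}" using that g h by (auto simp: bij_betw_def)
    then show ?thesis using that by (simp add: f_def f_inv_into_f)
  qed
  have "divisor_mat_wrt h F N = mat ?\<tau> ?\<tau> (\<lambda>(i, j). divisor_mat_wrt g F N $$ (f i, f j))"
    using permutes_in_image[OF f] by (intro eq_matI) (auto simp: divisor_mat_wrt_def gf)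
  then show ?thesis
    using perm_similar_permute[OF _ f, of "divisor_mat_wrt g F N"] by (simp add: divisor_mat_wrt_def)
qed

lemma num_divisors_mult: "coprime q m \<Longrightarrow> num_divisors (q * m) = num_divisors q * num_divisors m"
  by (simp add: num_divisors_def card_divisors_mult)

lemma bij_betw_divisor_enum_mult:
  assumes cop: "coprime q m"
    and g: "bij_betw g {..<num_divisors q} {d. d dvd q}"
    and h: "bij_betw h {..<num_divisors m} {d. d dvd m}"
  shows "bij_betw (\<lambda>i. g (i div num_divisors m) * h (i mod num_divisors m))
      {..<num_divisors (q * m)} {d. d dvd q * m}"
proof -
  have "num_divisors m > 0"
    using h by (metis bij_betw_def empty_iff image_empty lessThan_0 mem_Collect_eq dvd_1_left gr0I)
  then have "bij_betw ((\<lambda>(d1, d2). d1 * d2) \<circ> map_prod g h \<circ> (\<lambda>i. (i div num_divisors m, i mod num_divisors m)))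
      {..<num_divisors q * num_divisors m} {d. d dvd q * m}"
    by (intro bij_betw_trans[OF bij_betw_div_mod bij_betw_trans[OF bij_betw_map_prod[OF g h]
          bij_betw_divisors_mult[OF cop]]])
  then show ?thesis by (simp add: num_divisors_mult[OF cop] comp_def)
qed

lemma kron_divisor_mat_wrt:
  fixes F :: "nat \<Rightarrow> nat \<Rightarrow> nat \<Rightarrow> 'a::semiring_1"
  assumes cop: "coprime q m"
    and g: "bij_betw g {..<num_divisors q} {d. d dvd q}"
    and h: "bij_betw h {..<num_divisors m} {d. d dvd m}"
    and mult: "\<And>a1 a2 b1 b2. a1 dvd q \<Longrightarrow> b1 dvd q \<Longrightarrow> a2 dvd m \<Longrightarrow> b2 dvd m \<Longrightarrow>
        F (q * m) (a1 * a2) (b1 * b2) = F q a1 b1 * F m a2 b2"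
  shows "kron (divisor_mat_wrt g F q) (divisor_mat_wrt h F m)
       = divisor_mat_wrt (\<lambda>i. g (i div num_divisors m) * h (i mod num_divisors m)) F (q * m)"
proof (rule eq_matI)
  let ?s = "num_divisors q" and ?t = "num_divisors m"
  fix i j assume "i < dim_row (divisor_mat_wrt (\<lambda>i. g (i div ?t) * h (i mod ?t)) F (q * m))"
    "j < dim_col (divisor_mat_wrt (\<lambda>i. g (i div ?t) * h (i mod ?t)) F (q * m))"
  then have ij: "i < ?s * ?t" "j < ?s * ?t"
    by (simp_all add: divisor_mat_wrt_def num_divisors_mult[OF cop])
  then have "?t > 0" by (cases "?t = 0") simp_all
  then have "i div ?t < ?s" "j div ?t < ?s" "i mod ?t < ?t" "j mod ?t < ?t"
    using ij by (simp_all add: less_mult_imp_div_less)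
  then show "kron (divisor_mat_wrt g F q) (divisor_mat_wrt h F m) $$ (i, j)
      = divisor_mat_wrt (\<lambda>i. g (i div ?t) * h (i mod ?t)) F (q * m) $$ (i, j)"
    using ij g h by (auto simp: kron_def divisor_mat_wrt_def num_divisors_mult[OF cop] bij_betw_def
        intro!: mult[symmetric])
qed (simp_all add: kron_def divisor_mat_wrt_def num_divisors_mult[OF cop])

definition multiplicative_kernel :: "(nat \<Rightarrow> nat \<Rightarrow> nat \<Rightarrow> 'a::semiring_1) \<Rightarrow> bool" where
  "multiplicative_kernel F \<longleftrightarrow> F 1 1 1 = 1 \<and>
     (\<forall>q m a1 a2 b1 b2. coprime q m \<longrightarrow> q > 0 \<longrightarrow> m > 0 \<longrightarrow>
        a1 dvd q \<longrightarrow> b1 dvd q \<longrightarrow> a2 dvd m \<longrightarrow> b2 dvd m \<longrightarrow>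
        F (q * m) (a1 * a2) (b1 * b2) = F q a1 b1 * F m a2 b2)"

lemma kron_list_divisor_mat:
  fixes F :: "nat \<Rightarrow> nat \<Rightarrow> nat \<Rightarrow> 'a::semiring_1"
  assumes "sorted_wrt coprime qs" "\<forall>q\<in>set qs. q > 0" and F: "multiplicative_kernel F"
  shows "\<exists>h. bij_betw h {..<num_divisors (prod_list qs)} {d. d dvd prod_list qs}
    \<and> kron_list (map (divisor_mat F) qs) = divisor_mat_wrt h F (prod_list qs)"
  using assms(1,2)
proof (induction qs)
  case Nil
  have "num_divisors 1 = 1" by (simp add: num_divisors_def)
  then have "bij_betw (\<lambda>_. 1) {..<num_divisors 1} {d. d dvd (1::nat)}"
    by (simp add: bij_betw_def lessThan_Suc)
  moreover have "1\<^sub>m 1 = divisor_mat_wrt (\<lambda>_. 1) F 1"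
    using \<open>num_divisors 1 = 1\<close> F by (intro eq_matI) (simp_all add: divisor_mat_wrt_def multiplicative_kernel_def)
  ultimately show ?case by (auto simp: kron_list_def)
next
  case (Cons q qs)
  let ?m = "prod_list qs"
  have cop: "coprime q ?m"
    using Cons.prems(1) by (auto intro: prod_list_coprime_right)
  have q0: "q > 0" and m0: "?m > 0"
    using Cons.prems(2) by (auto simp: prod_list_zero_iff simp flip: neq0_conv)
  from q0 have g: "bij_betw ((!) (divisors_list q)) {..<num_divisors q} {d. d dvd q}"
    by (rule bij_betw_divisors_list)
  obtain h where h: "bij_betw h {..<num_divisors ?m} {d. d dvd ?m}"
    and kron_h: "kron_list (map (divisor_mat F) qs) = divisor_mat_wrt h F ?m"
    using Cons by auto
  have "kron_list (map (divisor_mat F) (q # qs)) = kron (divisor_mat F q) (divisor_mat_wrt h F ?m)"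
    using kron_h by (simp add: kron_list_def)
  also have "\<dots> = divisor_mat_wrt (\<lambda>i. divisors_list q ! (i div num_divisors ?m) * h (i mod num_divisors ?m))
      F (q * ?m)"
    unfolding divisor_mat_def
    by (rule kron_divisor_mat_wrt[OF cop g h]) (use F cop q0 m0 in \<open>simp add: multiplicative_kernel_def\<close>)
  finally show ?case
    using bij_betw_divisor_enum_mult[OF cop g h] by auto
qed

lemma perm_similar_divisor_mat_kron_list:
  fixes F :: "nat \<Rightarrow> nat \<Rightarrow> nat \<Rightarrow> 'a::semiring_1"
  assumes "n > 0" and F: "multiplicative_kernel F"
  shows "perm_similar (divisor_mat F n) (kron_list (map (divisor_mat F) (prime_power_factors n)))"
proof -
  have "\<forall>q\<in>set (prime_power_factors n). q > 0"
    using prime_power_factors_prime_power prime_gt_0_nat by fastforce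
  from kron_list_divisor_mat[OF sorted_wrt_coprime_prime_power_factors this F]
  obtain h where "bij_betw h {..<num_divisors n} {d. d dvd n}"
    and "kron_list (map (divisor_mat F) (prime_power_factors n)) = divisor_mat_wrt h F n"
    by (auto simp: prod_list_prime_power_factors[OF \<open>n > 0\<close>])
  then show ?thesis
    unfolding divisor_mat_def
    by (simp add: perm_similar_divisor_mat_wrt bij_betw_divisors_list[OF \<open>n > 0\<close>])
qed

section \<open>The matrices S(n) and U(n)\<close>

definition S_kernel :: "nat \<Rightarrow> nat \<Rightarrow> nat \<Rightarrow> complex" where
  "S_kernel N a b = ramanujan_sum a (int (N div b))"

definition U_kernel :: "nat \<Rightarrow> nat \<Rightarrow> nat \<Rightarrow> complex" where
  "U_kernel N a b = complex_of_real (1 / sqrt (real N)) * S_kernel N a b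
     * complex_of_real (sqrt (real (totient b) / real (totient a)))"

lemma S_mat_eq: "S_mat = divisor_mat S_kernel"
  by (rule ext) (simp add: S_mat_def divisor_mat_def divisor_mat_wrt_def S_kernel_def)

lemma U_mat_eq: "U_mat = divisor_mat U_kernel"
  by (rule ext) (simp add: U_mat_def divisor_mat_def divisor_mat_wrt_def U_kernel_def S_kernel_def)

lemma S_kernel_mult:
  "coprime q m \<Longrightarrow> q > 0 \<Longrightarrow> m > 0 \<Longrightarrow> a1 dvd q \<Longrightarrow> b1 dvd q \<Longrightarrow> a2 dvd m \<Longrightarrow> b2 dvd m \<Longrightarrow>
    S_kernel (q * m) (a1 * a2) (b1 * b2) = S_kernel q a1 b1 * S_kernel m a2 b2"
  unfolding S_kernel_def by (rule ramanujan_sum_divisor_mult)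

lemma U_kernel_mult:
  assumes cop: "coprime q m" and "q > 0" "m > 0"
    and d: "a1 dvd q" "b1 dvd q" "a2 dvd m" "b2 dvd m"
  shows "U_kernel (q * m) (a1 * a2) (b1 * b2) = U_kernel q a1 b1 * U_kernel m a2 b2"
proof -
  have "sqrt (real (totient (b1 * b2)) / real (totient (a1 * a2)))
      = sqrt (real (totient b1) / real (totient a1)) * sqrt (real (totient b2) / real (totient a2))"
    using coprime_divisors[OF d(1,3) cop] coprime_divisors[OF d(2,4) cop]
    by (simp add: totient_mult_coprime real_sqrt_mult[symmetric] times_divide_times_eq)
  then show ?thesis
    unfolding U_kernel_def S_kernel_mult[OF assms] by (simp add: real_sqrt_mult of_real_mult mult_ac)
qed

lemma multiplicative_kernel_S_kernel: "multiplicative_kernel S_kernel"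
  by (simp add: multiplicative_kernel_def S_kernel_mult) (simp add: S_kernel_def)

lemma multiplicative_kernel_U_kernel: "multiplicative_kernel U_kernel"
  by (simp add: multiplicative_kernel_def U_kernel_mult) (simp add: U_kernel_def S_kernel_def)

lemma ramanujan_orthogonality:
  assumes "n > 0" "a dvd n" "b dvd n"
  shows "(\<Sum>d | d dvd n. S_kernel n a d * S_kernel n d b) = (if a = b then of_nat n else 0)"
  using assms
proof (induction n a b rule: multiplicative_divisor_triple_induct)
  case (prime_power p k i j)
  have "p > 1" using prime_gt_1_nat[OF prime_power(1)] .
  then have "(\<Sum>d | d dvd p ^ k. S_kernel (p ^ k) (p ^ i) d * S_kernel (p ^ k) d (p ^ j))
      = (\<Sum>l\<le>k. ramanujan_sum (p ^ i) (int (p ^ (k - l))) * ramanujan_sum (p ^ l) (int (p ^ (k - j))))"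
    using prime_power by (auto simp: sum_divisors_prime_power S_kernel_def power_diff intro!: sum.cong)
  also have "\<dots> = (if p ^ i = p ^ j then of_nat (p ^ k) else 0)"
    using ramanujan_orthogonality_prime_power[OF prime_power] \<open>p > 1\<close> by (simp add: power_inject_exp)
  finally show ?case .
next
  case (coprime q m a1 a2 b1 b2)
  have "a1 * a2 = b1 * b2 \<longleftrightarrow> a1 = b1 \<and> a2 = b2"
    using inj_onD[OF bij_betw_imp_inj_on[OF bij_betw_divisors_mult[OF coprime(1)]], of "(a1, a2)" "(b1, b2)"]
      coprime by auto
  moreover have "S_kernel (q * m) (a1 * a2) (d1 * d2) * S_kernel (q * m) (d1 * d2) (b1 * b2)
      = (S_kernel q a1 d1 * S_kernel q d1 b1) * (S_kernel m a2 d2 * S_kernel m d2 b2)"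
    if "d1 dvd q" "d2 dvd m" for d1 d2
    using S_kernel_mult[OF coprime(1-3)] coprime(4-7) that by (simp add: mult_ac)
  ultimately show ?case
    using coprime(8,9)
    by (simp add: sum_divisors_mult[OF coprime(1)] sum_product[symmetric])
qed

lemma ramanujan_totient_symmetry:
  assumes "n > 0" "a dvd n" "b dvd n"
  shows "S_kernel n a b * of_nat (totient b) = S_kernel n b a * of_nat (totient a)"
  using assms
proof (induction n a b rule: multiplicative_divisor_triple_induct)
  case (prime_power p k i j)
  then show ?case
    using ramanujan_totient_symmetry_prime_power[OF prime_power] prime_gt_0_nat[of p]
    by (simp add: S_kernel_def power_diff[symmetric])
next
  case (coprime q m a1 a2 b1 b2)
  have "coprime a1 a2" "coprime b1 b2"
    using coprime_divisors coprime by blast+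
  then have "S_kernel (q * m) (a1 * a2) (b1 * b2) * of_nat (totient (b1 * b2))
      = (S_kernel q a1 b1 * of_nat (totient b1)) * (S_kernel m a2 b2 * of_nat (totient b2))"
    "S_kernel (q * m) (b1 * b2) (a1 * a2) * of_nat (totient (a1 * a2))
      = (S_kernel q b1 a1 * of_nat (totient a1)) * (S_kernel m b2 a2 * of_nat (totient a2))"
    using S_kernel_mult[OF coprime(1-3)] coprime(4-7) by (simp_all add: totient_mult_coprime mult_ac)
  then show ?case using coprime(8,9) by simp
qed

lemma U_kernel_symmetric:
  assumes "n > 0" "a dvd n" "b dvd n"
  shows "U_kernel n b a = U_kernel n a b"
proof -
  define A B where "A = real (totient a)" and "B = real (totient b)"
  have "A > 0" "B > 0" using assms by (auto simp: A_def B_def dvd_pos_nat)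
  then have sqrt_eq: "B / A * sqrt (A / B) = sqrt (B / A)"
    by (simp add: real_sqrt_divide field_simps flip: real_sqrt_mult)
  have "S_kernel n b a = S_kernel n a b * of_real (B / A)"
    using ramanujan_totient_symmetry[OF assms] \<open>A > 0\<close> by (simp add: A_def B_def field_simps)
  then have "U_kernel n b a = of_real (1 / sqrt (real n)) * S_kernel n a b * of_real (B / A * sqrt (A / B))"
    unfolding U_kernel_def A_def[symmetric] B_def[symmetric] by (simp add: of_real_mult mult_ac)
  then show ?thesis
    unfolding sqrt_eq by (simp add: U_kernel_def A_def B_def)
qed

lemma U_kernel_product:
  assumes "n > 0" "a > 0" "b > 0" "d > 0"
  shows "U_kernel n a d * U_kernel n d b
       = of_real (sqrt (real (totient b) / real (totient a)) / real n) * (S_kernel n a d * S_kernel n d b)"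
proof -
  have "sqrt (real (totient d) / real (totient a)) * sqrt (real (totient b) / real (totient d))
      = sqrt (real (totient b) / real (totient a))"
    using assms by (simp add: real_sqrt_divide)
  moreover have "1 / sqrt (real n) * (1 / sqrt (real n)) = 1 / real n"
    using assms by simp
  ultimately show ?thesis
    unfolding U_kernel_def by (simp add: mult_ac flip: of_real_mult)
qed

lemma S_mat_square:
  assumes "n > 0"
  shows "S_mat n * S_mat n = of_nat n \<cdot>\<^sub>m 1\<^sub>m (num_divisors n)"
proof (rule eq_matI)
  fix i j assume "i < dim_row (of_nat n \<cdot>\<^sub>m 1\<^sub>m (num_divisors n) :: complex mat)"
    "j < dim_col (of_nat n \<cdot>\<^sub>m 1\<^sub>m (num_divisors n) :: complex mat)"
  then have "i < num_divisors n" "j < num_divisors n" by simp_all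
  then show "(S_mat n * S_mat n) $$ (i, j) = (of_nat n \<cdot>\<^sub>m 1\<^sub>m (num_divisors n)) $$ (i, j)"
    using assms
    by (simp add: S_mat_eq divisor_mat_mult_entry ramanujan_orthogonality divisors_list_nth_dvd
        divisors_list_nth_eq_iff)
qed (simp_all add: S_mat_def)

lemma U_mat_square:
  assumes "n > 0"
  shows "U_mat n * U_mat n = 1\<^sub>m (num_divisors n)"
proof (rule eq_matI)
  let ?D = "divisors_list n"
  fix i j assume "i < dim_row (1\<^sub>m (num_divisors n) :: complex mat)"
    "j < dim_col (1\<^sub>m (num_divisors n) :: complex mat)"
  then have ij: "i < num_divisors n" "j < num_divisors n" by simp_all
  then have pos: "?D ! i > 0" "?D ! j > 0"
    using assms divisors_list_nth_dvd dvd_pos_nat by blast+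
  have "(U_mat n * U_mat n) $$ (i, j) = (\<Sum>d | d dvd n. U_kernel n (?D ! i) d * U_kernel n d (?D ! j))"
    unfolding U_mat_eq using assms ij by (rule divisor_mat_mult_entry)
  also have "\<dots> = of_real (sqrt (real (totient (?D ! j)) / real (totient (?D ! i))) / real n)
      * (\<Sum>d | d dvd n. S_kernel n (?D ! i) d * S_kernel n d (?D ! j))"
    unfolding sum_distrib_left
    using assms pos by (intro sum.cong refl U_kernel_product) (auto intro: dvd_pos_nat)
  also have "\<dots> = (1\<^sub>m (num_divisors n) :: complex mat) $$ (i, j)"
    using assms ij pos
    by (simp add: ramanujan_orthogonality divisors_list_nth_dvd divisors_list_nth_eq_iff)
  finally show "(U_mat n * U_mat n) $$ (i, j) = 1\<^sub>m (num_divisors n) $$ (i, j)" .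
qed (simp_all add: U_mat_def)

lemma U_mat_real:
  assumes "n > 0" "i < num_divisors n" "j < num_divisors n"
  shows "U_mat n $$ (i, j) \<in> \<real>"
proof -
  have "divisors_list n ! i > 0"
    using assms divisors_list_nth_dvd dvd_pos_nat by blast
  then show ?thesis
    using assms(2,3) ramanujan_sum_real
    by (simp add: U_mat_eq divisor_mat_def divisor_mat_wrt_def U_kernel_def S_kernel_def)
qed

lemma mat_adjoint_U_mat:
  assumes "n > 0"
  shows "mat_adjoint (U_mat n) = U_mat n"
proof (rule eq_matI)
  fix i j assume "i < dim_row (U_mat n)" "j < dim_col (U_mat n)"
  then have ij: "i < num_divisors n" "j < num_divisors n" by (simp_all add: U_mat_def)
  have "mat_adjoint (U_mat n) $$ (i, j) = cnj (U_mat n $$ (j, i))"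
    using ij by (simp add: mat_adjoint_def U_mat_def mat_of_rows_index cols_nth vec_index_conjugate
        conjugate_complex_def)
  also have "\<dots> = U_mat n $$ (j, i)"
    using U_mat_real[OF assms ij(2,1)] by (simp add: Reals_cnj_iff)
  also have "\<dots> = U_mat n $$ (i, j)"
    using assms ij
    by (simp add: U_mat_eq divisor_mat_def divisor_mat_wrt_def U_kernel_symmetric divisors_list_nth_dvd)
  finally show "mat_adjoint (U_mat n) $$ (i, j) = U_mat n $$ (i, j)" .
qed (simp_all add: mat_adjoint_def U_mat_def)

theorem mainTheorem1:
  fixes n :: nat
  assumes "n \<ge> 1"
  shows "perm_similar (S_mat n) (kron_list (map S_mat (prime_power_factors n)))
       \<and> perm_similar (U_mat n) (kron_list (map U_mat (prime_power_factors n)))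
       \<and> (\<forall>i < num_divisors n. \<forall>j < num_divisors n. U_mat n $$ (i, j) \<in> \<real>)
       \<and> mat_adjoint (U_mat n) = U_mat n
       \<and> U_mat n * U_mat n = 1\<^sub>m (num_divisors n)
       \<and> S_mat n * S_mat n = of_nat n \<cdot>\<^sub>m 1\<^sub>m (num_divisors n)"
proof -
  have n: "n > 0" using assms by simp
  have "perm_similar (S_mat n) (kron_list (map S_mat (prime_power_factors n)))"
    unfolding S_mat_eq by (rule perm_similar_divisor_mat_kron_list[OF n multiplicative_kernel_S_kernel])
  moreover have "perm_similar (U_mat n) (kron_list (map U_mat (prime_power_factors n)))"
    unfolding U_mat_eq by (rule perm_similar_divisor_mat_kron_list[OF n multiplicative_kernel_U_kernel])
  ultimately show ?thesis
    using U_mat_real[OF n] mat_adjoint_U_mat[OF n] U_mat_square[OF n] S_mat_square[OF n] by blast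
qed

end
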